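(* Let $\mathcal A\subset\mathbb R^n$ be a finite set with diameter $D_{\mathcal A}$, let $\mathcal X=\mathrm{conv}(\mathcal A)$, let $f$ have $L$-Lipschitz gradient, and let $\eta\in(1,2)$. Run the AC-FW algorithm with the pairwise Frank-Wolfe subroutine and a damping sequence satisfying Condition (D), with $L_0>0$. Then the subroutine satisfies parts (i) and (ii) of Condition (S); more precisely, for every $t\ge0$, $$|\mathcal G\cap\mathcal I_\eta\cap[t]|\ge\frac{t+1}{3|\mathcal A|!+1}-\left\lfloor\log_\eta\!\left(\frac{L}{rL_0}\right)\right\rfloor.$$ If additionally $f$ is convex, then part (iii) of Condition (S) holds with $R=1$.
   Context: $D_{\mathcal A}:=\max_{x,y\in\mathcal A}\|x-y\|_2$; $f:\mathbb R^n\to\mathbb R$ is differentiable with $\|\nabla f(x)-\nabla f(y)\|_2\le L\|x-y\|_2$. $x^\star$ is an optimal solution of $\min_{x\in\mathcal X}f(x)$. For $x\ne y$, $\ell(x,y):=2|f(y)-f(x)-\nabla f(x)^\top(y-x)|/\|y-x\|_2^2$, $\ell(x,x):=0$. AC-FW algorithm: given $\{r_t\}_{t\ge0}$ and a subroutine, pick $x_{-1}\in\mathcal A$, $x_0\in\arg\min_{v\in\mathcal A}\nabla f(x_{-1})^\top v$, $L_0:=\ell(x_{-1},x_0)$. For $t=0,1,\dots$: $v_t\in\arg\min_{v\in\mathcal A}\nabla f(x_t)^\top v$; the subroutine returns $(d_t,\gamma_t^{\max})$; $\gamma_t:=\min\{\nabla f(x_t)^\top d_t/(L_t\|d_t\|_2^2),\gamma_t^{\max}\}$;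 $\bar x_{t+1}:=x_t-\gamma_td_t$; $L_{t+1}:=\max\{\ell(x_t,\bar x_{t+1}),r_tL_t\}$; $x_{t+1}:=\bar x_{t+1}$ if $f(\bar x_{t+1})<f(x_t)$, else $x_{t+1}:=x_t$. Pairwise Frank-Wolfe subroutine: it maintains weights $\alpha_{s,t}\ge0$ ($s\in\mathcal A$) with active set $\mathcal S_t:=\{s\in\mathcal A:\alpha_{s,t}>0\}$ and $x_t=\sum_{s\in\mathcal A}\alpha_{s,t}s$; initially $\mathcal S_0=\{x_0\}$, $\alpha_{x_0,0}=1$. At iteration $t$: $s_t\in\arg\max_{s\in\mathcal S_t}\nabla f(x_t)^\top s$, $d_t:=s_t-v_t$, $\gamma_t^{\max}:=\alpha_{s_t,t}$. If $x_{t+1}=\bar x_{t+1}$ (accepted), then $\alpha_{s_t,t+1}:=\alpha_{s_t,t}-\gamma_t$, $\alpha_{v_t,t+1}:=\alpha_{v_t,t}+\gamma_t$, and $\alpha_{s,t+1}:=\alpha_{s,t}$ for $s\notin\{s_t,v_t\}$; otherwise $\alpha_{\cdot,t+1}:=\alpha_{\cdot,t}$. Then $\mathcal S_{t+1}:=\{s:\alpha_{s,t+1}>0\}$. $[t]:=\{0,\dots,t\}$; $\mathcal I_\eta:=\{t\ge0:L_{t+1}\le\eta L_t\}$; $\mathcal G:=\{t\ge0:\gamma_t^{\max}\ge1\text{ or }\gamma_t<\gamma_t^{\max}\}$. Condition (D): $r_t\in(0,1]$ for all $t$ and $r:=\prod_{t\ge0}r_t\in(0,1]$. Condition (S): for all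 $t\ge0$: (i) $\|d_t\|_2\le D_{\mathcal A}$ and $x_t-\gamma d_t\in\mathcal X$ for all $\gamma\in[0,\gamma_t^{\max}]$; (ii) $\mathcal G$ is infinite; (iii) if $f$ is convex, there is $R\ge1$ independent of $t$ with $\nabla f(x_t)^\top d_t\ge(f(x_t)-f(x^\star))/R$. *)

theory Defs
  imports "HOL-Analysis.Analysis"
begin

definition ell :: "('a::real_inner \<Rightarrow> real) \<Rightarrow> ('a \<Rightarrow> 'a) \<Rightarrow> 'a \<Rightarrow> 'a \<Rightarrow> real" where
  "ell f g x y = (if x = y then 0
     else 2 * \<bar>f y - f x - g x \<bullet> (y - x)\<bar> / (norm (y - x))\<^sup>2)"

definition pfw_update :: "('a \<Rightarrow> real) \<Rightarrow> 'a \<Rightarrow> 'a \<Rightarrow> real \<Rightarrow> ('a \<Rightarrow> real)" where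
  "pfw_update \<alpha> s v \<gamma> = (\<lambda>u. \<alpha> u - (if u = s then \<gamma> else 0) + (if u = v then \<gamma> else 0))"

end

theory Submission
  imports Defs
begin

(* Write x_t as the convex combination of A with weights alpha_t; parts (i) and (iii) are facts
   about this representation. Call a step in I_eta but not in G a drop step: it moves the whole
   weight of s_t onto v_t. Because eta < 2, drop steps are accepted, so f strictly decreases along
   a run of drop steps and the weight vectors of a run are distinct. They are also few: each is a
   relabelling of the first weight vector of the run with the same support size k, and a vector
   with k nonzero entries has at most n!/(n-k)! relabellings (n = |A|), which sum to at most
   e n! <= 3 n!. Steps outside I_eta multiply the curvature estimate by more than eta, while the
   damping costs at most the factor r overall and the estimate never exceeds L, so there are at
   most floor(log_eta (L / (r L_0))) of them. Since step 0 lies in G, every run of steps that are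
   neither in G nor outside I_eta is a run of drop steps, which gives the bound. *)

section \<open>Lipschitz gradients and convexity\<close>

lemma has_real_derivative_along_line:
  fixes f :: "'a::real_inner \<Rightarrow> real"
  assumes "\<And>y. (f has_derivative (\<lambda>h. g y \<bullet> h)) (at y)"
  shows "((\<lambda>l. f (x + l *\<^sub>R h)) has_real_derivative g (x + l *\<^sub>R h) \<bullet> h) (at l)"
proof -
  have "((\<lambda>l. x + l *\<^sub>R h) has_derivative (\<lambda>d. d *\<^sub>R h)) (at l)"
    by (auto intro!: derivative_eq_intros)
  from has_derivative_compose[OF this assms]
  show ?thesis
    unfolding has_field_derivative_def by (rule has_derivative_eq_rhs) (simp add: fun_eq_iff)
qed

lemma lipschitz_gradient_upper_bound:
  fixes f :: "'a::real_inner \<Rightarrow> real"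
  assumes grad: "\<And>y. (f has_derivative (\<lambda>h. g y \<bullet> h)) (at y)"
    and lip: "\<And>y z. norm (g y - g z) \<le> L * norm (y - z)"
  shows "f (x + h) - f x - g x \<bullet> h \<le> L / 2 * (norm h)\<^sup>2"
proof -
  define p where "p l = f (x + l *\<^sub>R h) - l * (g x \<bullet> h) - L / 2 * (norm h)\<^sup>2 * l\<^sup>2" for l
  have deriv: "(p has_real_derivative g (x + l *\<^sub>R h) \<bullet> h - g x \<bullet> h - L * (norm h)\<^sup>2 * l) (at l)"
    for l
    unfolding p_def
    by (auto intro!: derivative_eq_intros has_real_derivative_along_line[OF grad])
  have "p 1 \<le> p 0"
  proof (rule DERIV_nonpos_imp_nonincreasing[of 0 1 p])
    fix l :: real
    assume l: "0 \<le> l" "l \<le> 1"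
    have "(g (x + l *\<^sub>R h) - g x) \<bullet> h \<le> norm (g (x + l *\<^sub>R h) - g x) * norm h"
      by (rule norm_cauchy_schwarz)
    also have "\<dots> \<le> L * norm (l *\<^sub>R h) * norm h"
      using lip[of "x + l *\<^sub>R h" x] by (simp add: mult_right_mono)
    also have "\<dots> = L * (norm h)\<^sup>2 * l"
      using l by (simp add: power2_eq_square)
    finally have "g (x + l *\<^sub>R h) \<bullet> h - g x \<bullet> h - L * (norm h)\<^sup>2 * l \<le> 0"
      by (simp add: inner_diff_left)
    with deriv show "\<exists>y. (p has_real_derivative y) (at l) \<and> y \<le> 0"
      by blast
  qed simp
  then show ?thesis
    unfolding p_def by simp
qed

lemma lipschitz_gradient_quadratic_bound:
  fixes f :: "'a::real_inner \<Rightarrow> real"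
  assumes grad: "\<And>y. (f has_derivative (\<lambda>h. g y \<bullet> h)) (at y)"
    and lip: "\<And>y z. norm (g y - g z) \<le> L * norm (y - z)"
  shows "\<bar>f y - f x - g x \<bullet> (y - x)\<bar> \<le> L / 2 * (norm (y - x))\<^sup>2"
proof -
  have neg_grad: "((\<lambda>z. - f z) has_derivative (\<lambda>h. - g y \<bullet> h)) (at y)" for y
    using grad by (auto intro!: derivative_eq_intros)
  have neg_lip: "norm (- g y - - g z) \<le> L * norm (y - z)" for y z
    using lip[of z y] by (simp add: norm_minus_commute)
  from lipschitz_gradient_upper_bound[OF neg_grad neg_lip, of x "y - x"]
  have "f x - f y + g x \<bullet> (y - x) \<le> L / 2 * (norm (y - x))\<^sup>2"
    by simp
  moreover have "f y - f x - g x \<bullet> (y - x) \<le> L / 2 * (norm (y - x))\<^sup>2"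
    using lipschitz_gradient_upper_bound[OF grad lip, of x "y - x"] by simp
  ultimately show ?thesis
    by linarith
qed

lemma ell_le_lipschitz_constant:
  fixes f :: "'a::real_inner \<Rightarrow> real"
  assumes "\<And>y. (f has_derivative (\<lambda>h. g y \<bullet> h)) (at y)"
    and "\<And>y z. norm (g y - g z) \<le> L * norm (y - z)"
    and "x \<noteq> y"
  shows "ell f g x y \<le> L"
  using lipschitz_gradient_quadratic_bound[OF assms(1,2), of y x] \<open>x \<noteq> y\<close>
  by (simp add: ell_def divide_le_eq)

lemma ell_ge_if_no_decrease:
  fixes f :: "'a::real_inner \<Rightarrow> real"
  assumes no_decrease: "f x \<le> f (x - a *\<^sub>R d)"
    and a: "0 < a" "a \<le> g x \<bullet> d / (K * (norm d)\<^sup>2)" and K: "0 < K"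
  shows "2 * K \<le> ell f g x (x - a *\<^sub>R d)"
proof -
  have "d \<noteq> 0"
    using a by auto
  then have D: "0 < (norm d)\<^sup>2"
    by simp
  have "K * (a\<^sup>2 * (norm d)\<^sup>2) = a * (a * K * (norm d)\<^sup>2)"
    by (simp add: power2_eq_square)
  also have "\<dots> \<le> a * (g x \<bullet> d)"
    using a K D by (intro mult_left_mono) (simp_all add: field_simps)
  also have "\<dots> \<le> \<bar>f (x - a *\<^sub>R d) - f x + a * (g x \<bullet> d)\<bar>"
    using no_decrease by linarith
  finally have "2 * K * (a\<^sup>2 * (norm d)\<^sup>2) \<le> 2 * \<bar>f (x - a *\<^sub>R d) - f x + a * (g x \<bullet> d)\<bar>"
    by simp
  then show ?thesis
    using a D \<open>d \<noteq> 0\<close>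
    by (simp add: ell_def le_divide_eq power_mult_distrib)
qed

lemma convex_on_gradient_inequality:
  fixes f :: "'a::real_inner \<Rightarrow> real"
  assumes grad: "\<And>y. (f has_derivative (\<lambda>h. g y \<bullet> h)) (at y)"
    and convex: "convex_on UNIV f"
  shows "f x + g x \<bullet> (y - x) \<le> f y"
proof -
  define p where "p = (\<lambda>l. f (x + l *\<^sub>R (y - x)))"
  have "convex_on UNIV p"
  proof (rule convex_onI)
    fix t a b :: real
    assume "0 < t" "t < 1"
    moreover have "x + ((1 - t) * a + t * b) *\<^sub>R (y - x)
        = (1 - t) *\<^sub>R (x + a *\<^sub>R (y - x)) + t *\<^sub>R (x + b *\<^sub>R (y - x))"
      by (simp add: algebra_simps)
    ultimately show "p ((1 - t) *\<^sub>R a + t *\<^sub>R b) \<le> (1 - t) * p a + t * p b"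
      unfolding p_def using convex_onD[OF convex] by simp
  qed simp
  then have "g x \<bullet> (y - x) * (1 - 0) \<le> p 1 - p 0"
    by (rule convex_on_imp_above_tangent)
      (use has_real_derivative_along_line[OF grad, of x "y - x" 0] in \<open>auto simp: p_def\<close>)
  then show ?thesis
    by (simp add: p_def)
qed

section \<open>Pairwise updates of convex weights\<close>

definition convex_weights :: "'a::real_vector set \<Rightarrow> ('a \<Rightarrow> real) \<Rightarrow> 'a \<Rightarrow> bool" where
  "convex_weights A \<beta> y \<longleftrightarrow>
     (\<forall>u. 0 \<le> \<beta> u) \<and> (\<forall>u. u \<notin> A \<longrightarrow> \<beta> u = 0) \<and> sum \<beta> A = 1 \<and> (\<Sum>u\<in>A. \<beta> u *\<^sub>R u) = y"

lemma sum_pfw_update: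
  assumes "finite A" "s \<in> A" "v \<in> A"
  shows "sum (pfw_update \<beta> s v c) A = sum \<beta> A"
  using assms by (simp add: pfw_update_def sum.distrib sum_subtractf)

lemma sum_scaleR_pfw_update:
  fixes \<beta> :: "'a::real_vector \<Rightarrow> real"
  assumes "finite A" "s \<in> A" "v \<in> A"
  shows "(\<Sum>u\<in>A. pfw_update \<beta> s v c u *\<^sub>R u) = (\<Sum>u\<in>A. \<beta> u *\<^sub>R u) - c *\<^sub>R (s - v)"
  using assms
  by (simp add: pfw_update_def scaleR_add_left scaleR_diff_left scaleR_diff_right sum.distrib
      sum_subtractf if_distrib[of "\<lambda>z. z *\<^sub>R _"] cong: if_cong)

lemma convex_weights_pfw_update:
  assumes "finite A" "convex_weights A \<beta> y" "s \<in> A" "v \<in> A" "0 \<le> c" "c \<le> \<beta> s"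
  shows "convex_weights A (pfw_update \<beta> s v c) (y - c *\<^sub>R (s - v))"
  using assms sum_pfw_update[OF assms(1,3,4)] sum_scaleR_pfw_update[OF assms(1,3,4)]
  by (auto simp: convex_weights_def pfw_update_def add_nonneg_nonneg)

lemma convex_weights_in_convex_hull_support:
  assumes "finite A" "convex_weights A \<beta> y"
  shows "y \<in> convex hull {u \<in> A. 0 < \<beta> u}"
proof -
  let ?S = "{u \<in> A. 0 < \<beta> u}"
  have nonneg: "\<forall>u. 0 \<le> \<beta> u"
    using assms(2) by (simp add: convex_weights_def)
  have "sum \<beta> ?S = sum \<beta> A"
    by (rule sum.mono_neutral_left[OF assms(1)]) (use nonneg in \<open>auto simp: not_less order.antisym\<close>)
  moreover have "(\<Sum>u\<in>?S. \<beta> u *\<^sub>R u) = (\<Sum>u\<in>A. \<beta> u *\<^sub>R u)"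
    by (rule sum.mono_neutral_left[OF assms(1)]) (use nonneg in \<open>auto simp: not_less order.antisym\<close>)
  ultimately have "sum \<beta> ?S = 1" "(\<Sum>u\<in>?S. \<beta> u *\<^sub>R u) = y"
    using assms(2) by (simp_all add: convex_weights_def)
  moreover have "finite ?S"
    using assms(1) by simp
  ultimately show ?thesis
    using nonneg by (subst convex_hull_finite) blast+
qed

lemma pfw_update_full_step_eq_transpose:
  assumes "s \<noteq> v" "\<beta> v = 0"
  shows "pfw_update \<beta> s v (\<beta> s) = \<beta> \<circ> Transposition.transpose s v"
  using assms by (auto simp: fun_eq_iff pfw_update_def transpose_def)

lemma support_pfw_update_full_step:
  assumes "s \<noteq> v" "v \<in> A" "0 \<le> \<beta> v" "0 < \<beta> s"
  shows "{u \<in> A. 0 < pfw_update \<beta> s v (\<beta> s) u} =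
    (if \<beta> v = 0 then insert v ({u \<in> A. 0 < \<beta> u} - {s}) else {u \<in> A. 0 < \<beta> u} - {s})"
  using assms by (auto simp: pfw_update_def)

section \<open>Counting lemmas\<close>

lemma card_relabellings_le:
  fixes \<beta> :: "'a \<Rightarrow> real"
  assumes "finite A" "S \<subseteq> A" "\<And>u. u \<notin> S \<Longrightarrow> \<beta> u = 0"
  shows "card {\<beta> \<circ> \<sigma> | \<sigma>. \<sigma> permutes A} \<le> (\<Prod>i<card S. card A - i)"
proof -
  let ?Inj = "{h \<in> S \<rightarrow>\<^sub>E A. inj_on h S}"
  \<comment> \<open>\<open>\<beta> \<circ> \<sigma>\<close> only depends on where \<open>inv \<sigma>\<close> sends the support \<open>S\<close>\<close>
  define relabel where
    "relabel h u = (if u \<in> h ` S then \<beta> (the_inv_into S h u) else 0)" for h :: "'a \<Rightarrow> 'a" and u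
  have "\<beta> \<circ> \<sigma> = relabel (restrict (inv \<sigma>) S)" if "\<sigma> permutes A" for \<sigma>
  proof
    fix u
    have inj: "inj_on (inv \<sigma>) S"
      using permutes_inj[OF permutes_inv[OF that]] by (rule inj_on_subset) simp
    show "(\<beta> \<circ> \<sigma>) u = relabel (restrict (inv \<sigma>) S) u"
    proof (cases "\<sigma> u \<in> S")
      case True
      then have "u \<in> inv \<sigma> ` S"
        using permutes_inverses(2)[OF that] by (metis image_eqI)
      moreover have "the_inv_into S (restrict (inv \<sigma>) S) u = \<sigma> u"
        using True inj permutes_inverses(2)[OF that]
        by (intro the_inv_into_f_eq) (auto simp: inj_on_def)
      ultimately show ?thesis
        by (simp add: relabel_def)
    next
      case False
      then have "u \<notin> inv \<sigma> ` S"
        using permutes_inverses[OF that] by force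
      then show ?thesis
        using False assms(3) by (simp add: relabel_def)
    qed
  qed
  moreover have "restrict (inv \<sigma>) S \<in> ?Inj" if "\<sigma> permutes A" for \<sigma>
    using permutes_inv[OF that] assms(2)
    by (auto simp: permutes_in_image inj_on_def dest: permutes_inj)
  ultimately have "{\<beta> \<circ> \<sigma> | \<sigma>. \<sigma> permutes A} \<subseteq> relabel ` ?Inj"
    by blast
  moreover have "finite ?Inj"
    using assms(1,2) by (auto intro: finite_subset[OF _ finite_PiE[of S "\<lambda>_. A"]] finite_subset)
  ultimately have "card {\<beta> \<circ> \<sigma> | \<sigma>. \<sigma> permutes A} \<le> card ?Inj"
    by (meson card_image_le card_mono finite_imageI order_trans)
  also have "card ?Inj = (\<Prod>i<card S. card A - i)"
    using card_inj_on_subset_funcset[of S A S] assms(1,2) finite_subset[OF assms(2,1)]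
    by (simp add: atLeast0LessThan)
  finally show ?thesis .
qed

lemma falling_factorial_mult_fact:
  "k \<le> n \<Longrightarrow> (\<Prod>i<k. n - i) * fact (n - k) = (fact n :: nat)"
proof (induction k)
  case (Suc k)
  then have "n - k = Suc (n - Suc k)"
    by simp
  then have "fact (n - k) = (n - k) * (fact (n - Suc k) :: nat)"
    by (simp add: fact_Suc)
  then show ?case
    using Suc by (simp add: algebra_simps)
qed simp

lemma sum_falling_factorials_le: "(\<Sum>k\<le>n. \<Prod>i<k. n - i) \<le> 3 * (fact n :: nat)"
proof -
  have "real (\<Prod>i<k. n - i) = fact n * (1 / fact (n - k))" if "k \<le> n" for k
    using arg_cong[OF falling_factorial_mult_fact[OF that], of real] by (simp add: field_simps)
  then have "real (\<Sum>k\<le>n. \<Prod>i<k. n - i) = fact n * (\<Sum>k<Suc n. 1 / fact (n - k))"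
    unfolding of_nat_sum sum_distrib_left lessThan_Suc_atMost by (intro sum.cong) auto
  also have "(\<Sum>k<Suc n. 1 / fact (n - k)) = (\<Sum>k<Suc n. 1 / fact k :: real)"
    using sum.nat_diff_reindex[of "\<lambda>k. 1 / fact k :: real" "Suc n"] by simp
  also have "\<dots> \<le> (\<Sum>k. 1 / fact k)"
    using summable_exp[of "1 :: real"] by (intro sum_le_suminf) (simp_all add: inverse_eq_divide)
  also have "\<dots> = exp 1"
    by (simp add: exp_def inverse_eq_divide)
  also have "fact n * exp 1 \<le> fact n * (3 :: real)"
    by (intro mult_left_mono exp_le) simp
  finally have "real (\<Sum>k\<le>n. \<Prod>i<k. n - i) \<le> real (3 * fact n)"
    by simp
  then show ?thesis
    by (simp only: of_nat_le_iff)
qed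

lemma card_atMost_inter_ge_if_gaps_bounded:
  fixes P :: "nat set"
  assumes "0 \<in> P" and gaps: "\<And>a c. {a..<a + c} \<inter> P = {} \<Longrightarrow> c \<le> M"
  shows "t + 1 \<le> (M + 1) * card ({..t} \<inter> P)"
proof -
  have "{..t} - P \<subseteq> (\<Union>p\<in>{..t} \<inter> P. {p<..p + M})"
  proof
    fix j
    assume j: "j \<in> {..t} - P"
    define p where "p = Max {p \<in> P. p \<le> j}"
    have "p \<in> {p \<in> P. p \<le> j}"
      unfolding p_def using \<open>0 \<in> P\<close> by (intro Max_in) auto
    then have p: "p \<in> P" "p \<le> j"
      by auto
    have last: "i \<le> p" if "i \<in> P" "i \<le> j" for i
      unfolding p_def using that by (intro Max_ge) auto
    have "{Suc p..<Suc p + (j - p)} \<inter> P = {}"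
      using last p j by fastforce
    then have "j - p \<le> M"
      by (rule gaps)
    moreover have "p \<noteq> j"
      using p(1) j by blast
    ultimately show "j \<in> (\<Union>p\<in>{..t} \<inter> P. {p<..p + M})"
      using p j by (intro UN_I[of p]) auto
  qed
  then have "card ({..t} - P) \<le> card (\<Union>p\<in>{..t} \<inter> P. {p<..p + M})"
    by (intro card_mono) auto
  also have "\<dots> \<le> (\<Sum>p\<in>{..t} \<inter> P. card {p<..p + M})"
    by (rule card_UN_le) simp
  also have "\<dots> = M * card ({..t} \<inter> P)"
    by simp
  finally show ?thesis
    using card_Int_Diff[of "{..t}" P] by simp
qed

lemma sequence_lower_bound_by_large_increases:
  fixes K r :: "nat \<Rightarrow> real"
  assumes "1 \<le> \<eta>" and K: "\<And>t. 0 \<le> K t" and r: "\<And>t. 0 \<le> r t" "\<And>t. r t \<le> 1"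
    and step: "\<And>t. r t * K t \<le> K (Suc t)"
  shows "(\<Prod>t<T. r t) * \<eta> ^ card ({..<T} - {t. K (Suc t) \<le> \<eta> * K t}) * K 0 \<le> K T"
proof (induction T)
  case (Suc T)
  let ?J = "{t. K (Suc t) \<le> \<eta> * K t}"
  let ?b = "card ({..<T} - ?J)"
  have IH: "(\<Prod>t<T. r t) * \<eta> ^ ?b * K 0 \<le> K T"
    by (fact Suc)
  have prod: "(\<Prod>t<Suc T. r t) = r T * (\<Prod>t<T. r t)"
    by simp
  show ?case
  proof (cases "T \<in> ?J")
    case True
    then have "card ({..<Suc T} - ?J) = ?b"
      by (simp add: lessThan_Suc)
    then have "(\<Prod>t<Suc T. r t) * \<eta> ^ card ({..<Suc T} - ?J) * K 0
        = r T * ((\<Prod>t<T. r t) * \<eta> ^ ?b * K 0)"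
      by (simp only: prod mult.assoc)
    also have "\<dots> \<le> r T * K T"
      using IH r(1) by (rule mult_left_mono)
    also have "\<dots> \<le> K (Suc T)"
      by (rule step)
    finally show ?thesis .
  next
    case False
    then have "card ({..<Suc T} - ?J) = Suc ?b"
      by (simp add: lessThan_Suc insert_Diff_if)
    then have "(\<Prod>t<Suc T. r t) * \<eta> ^ card ({..<Suc T} - ?J) * K 0
        = r T * (\<eta> * ((\<Prod>t<T. r t) * \<eta> ^ ?b * K 0))"
      by (simp only: prod power_Suc mult.assoc mult.left_commute)
    also have "\<dots> \<le> r T * (\<eta> * K T)"
      using IH r \<open>1 \<le> \<eta>\<close> by (intro mult_left_mono) auto
    also have "\<dots> \<le> \<eta> * K T"
      using r[of T] K[of T] \<open>1 \<le> \<eta>\<close> by (intro mult_left_le_one_le) auto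
    also have "\<dots> \<le> K (Suc T)"
      using False by simp
    finally show ?thesis .
  qed
qed simp

section \<open>The AC-FW iteration with pairwise steps\<close>

locale pairwise_acfw =
  fixes A :: "'a::real_inner set"
    and f :: "'a \<Rightarrow> real" and g :: "'a \<Rightarrow> 'a" and L :: real
    and \<eta> :: real and r :: "nat \<Rightarrow> real" and rr :: real
    and xm1 :: 'a and x v s d xb :: "nat \<Rightarrow> 'a"
    and \<gamma> \<gamma>max Lk :: "nat \<Rightarrow> real" and \<alpha> :: "nat \<Rightarrow> 'a \<Rightarrow> real"
  assumes finA: "finite A"
    and grad: "\<And>y. (f has_derivative (\<lambda>h. g y \<bullet> h)) (at y)"
    and lip: "\<And>y z. norm (g y - g z) \<le> L * norm (y - z)"
    and eta: "1 < \<eta>" "\<eta> < 2"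
    and r_pos: "\<And>t. 0 < r t" and r_le1: "\<And>t. r t \<le> 1"
    and r_prod: "(\<lambda>T. \<Prod>t<T. r t) \<longlonglongrightarrow> rr" and rr_pos: "0 < rr"
    and x0: "x 0 \<in> A"
    and L0: "Lk 0 = ell f g xm1 (x 0)" and L0_pos: "0 < Lk 0"
    and vt: "\<And>t. v t \<in> A" "\<And>t u. u \<in> A \<Longrightarrow> g (x t) \<bullet> v t \<le> g (x t) \<bullet> u"
    and alpha0: "\<alpha> 0 = (\<lambda>u. if u = x 0 then 1 else 0)"
    and st: "\<And>t. s t \<in> {u \<in> A. \<alpha> t u > 0}"
      "\<And>t u. u \<in> {u \<in> A. \<alpha> t u > 0} \<Longrightarrow> g (x t) \<bullet> u \<le> g (x t) \<bullet> s t"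
    and dt: "\<And>t. d t = s t - v t"
    and gmax: "\<And>t. \<gamma>max t = \<alpha> t (s t)"
    and gam: "\<And>t. \<gamma> t = min (g (x t) \<bullet> d t / (Lk t * (norm (d t))\<^sup>2)) (\<gamma>max t)"
    and xbar: "\<And>t. xb t = x t - \<gamma> t *\<^sub>R d t"
    and Lnext: "\<And>t. Lk (Suc t) = max (ell f g (x t) (xb t)) (r t * Lk t)"
    and xnext: "\<And>t. x (Suc t) = (if f (xb t) < f (x t) then xb t else x t)"
    and anext: "\<And>t. \<alpha> (Suc t) =
        (if f (xb t) < f (x t) then pfw_update (\<alpha> t) (s t) (v t) (\<gamma> t) else \<alpha> t)"
begin

definition active :: "nat \<Rightarrow> 'a set" where
  "active t = {u \<in> A. \<alpha> t u > 0}"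

definition Gsteps :: "nat set" where
  "Gsteps = {t. \<gamma>max t \<ge> 1 \<or> \<gamma> t < \<gamma>max t}"

definition Isteps :: "nat set" where
  "Isteps = {t. Lk (Suc t) \<le> \<eta> * Lk t}"

lemma s_active: "s t \<in> active t"
  using st(1) by (simp add: active_def)

lemma s_in_A: "s t \<in> A"
  using s_active by (simp add: active_def)

lemma inner_direction_nonneg: "0 \<le> g (x t) \<bullet> d t"
  using vt(2)[OF s_in_A] by (simp add: dt inner_diff_right)

lemma Lk_pos: "0 < Lk t"
  by (induction t) (use L0_pos r_pos in \<open>auto simp: Lnext intro: max.strict_coboundedI2\<close>)

lemma step_size_nonneg: "0 \<le> \<gamma> t"
  using inner_direction_nonneg[of t] Lk_pos[of t] s_active[of t]
  by (simp add: gam gmax active_def)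

lemma step_size_le_max: "\<gamma> t \<le> \<gamma>max t"
  by (simp add: gam)

lemma convex_weights_iterate: "convex_weights A (\<alpha> t) (x t)"
proof (induction t)
  case 0
  show ?case
    using finA x0 by (simp add: convex_weights_def alpha0 if_distrib[of "\<lambda>z. z *\<^sub>R _"] cong: if_cong)
next
  case (Suc t)
  have "convex_weights A (pfw_update (\<alpha> t) (s t) (v t) (\<gamma> t)) (xb t)"
    using convex_weights_pfw_update[OF finA Suc s_in_A vt(1) step_size_nonneg]
      step_size_le_max[of t] by (simp add: gmax xbar dt)
  then show ?case
    using Suc by (simp add: anext xnext)
qed

lemma norm_direction_le_diameter: "norm (d t) \<le> diameter A"
  using diameter_bounded_bound[OF finite_imp_bounded[OF finA] s_in_A vt(1)]
  by (simp add: dt dist_norm)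

lemma step_in_convex_hull:
  assumes "c \<in> {0..\<gamma>max t}"
  shows "x t - c *\<^sub>R d t \<in> convex hull A"
proof -
  have "convex_weights A (pfw_update (\<alpha> t) (s t) (v t) c) (x t - c *\<^sub>R d t)"
    using convex_weights_pfw_update[OF finA convex_weights_iterate s_in_A vt(1)] assms
    by (simp add: gmax dt)
  then show ?thesis
    using convex_weights_in_convex_hull_support[OF finA] hull_mono[of "{u \<in> A. _ u > 0}" A]
    by blast
qed

lemma suboptimality_le_inner_direction:
  assumes "convex_on UNIV f" and "y \<in> convex hull A"
  shows "f (x t) - f y \<le> g (x t) \<bullet> d t"
proof -
  have "g (x t) \<bullet> v t \<le> g (x t) \<bullet> y"
    using hull_minimal[of A "{z. g (x t) \<bullet> v t \<le> g (x t) \<bullet> z}" convex] vt(2) assms(2)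
    by (auto simp: convex_halfspace_ge)
  moreover have "g (x t) \<bullet> x t \<le> g (x t) \<bullet> s t"
    using hull_minimal[of "active t" "{z. g (x t) \<bullet> z \<le> g (x t) \<bullet> s t}" convex] st(2)
      convex_weights_in_convex_hull_support[OF finA convex_weights_iterate]
    by (auto simp: convex_halfspace_le active_def)
  ultimately show ?thesis
    using convex_on_gradient_inequality[OF grad assms(1), of "x t" y]
    by (simp add: dt inner_diff_right)
qed

lemma ell_le_L: "ell f g y z \<le> L"
proof (cases "y = z")
  case True
  have "xm1 \<noteq> x 0"
    using L0 L0_pos by (auto simp: ell_def)
  then have "0 < L"
    using ell_le_lipschitz_constant[OF grad lip] L0 L0_pos by (metis order.strict_trans2)
  with True show ?thesis
    by (simp add: ell_def)
qed (rule ell_le_lipschitz_constant[OF grad lip])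

lemma Lk_le_L: "Lk t \<le> L"
proof (induction t)
  case 0
  show ?case
    unfolding L0 by (rule ell_le_L)
next
  case (Suc t)
  have "r t * Lk t \<le> Lk t"
    using r_pos[of t] r_le1[of t] Lk_pos[of t] by (intro mult_left_le_one_le) auto
  then show ?case
    using Suc ell_le_L by (simp add: Lnext)
qed

lemma card_not_Isteps_le:
  "real (card ({..<T} - Isteps)) \<le> \<lfloor>log \<eta> (L / (rr * Lk 0))\<rfloor>"
proof -
  let ?b = "card ({..<T} - Isteps)"
  have "rr \<le> (\<Prod>t<T. r t)"
  proof (rule decseq_ge[OF _ r_prod])
    show "decseq (\<lambda>T. \<Prod>t<T. r t)"
      using r_pos r_le1 by (intro decseq_SucI) (simp add: mult_left_le less_imp_le prod_nonneg)
  qed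
  then have "rr * \<eta> ^ ?b * Lk 0 \<le> (\<Prod>t<T. r t) * \<eta> ^ ?b * Lk 0"
    using eta L0_pos by (intro mult_right_mono) auto
  also have "\<dots> \<le> Lk T"
    using sequence_lower_bound_by_large_increases[of \<eta> Lk r] eta Lk_pos r_pos r_le1
    by (auto simp: Isteps_def Lnext less_imp_le)
  also have "\<dots> \<le> L"
    by (rule Lk_le_L)
  finally have "\<eta> ^ ?b \<le> L / (rr * Lk 0)"
    using rr_pos L0_pos by (simp add: field_simps)
  then have "real ?b \<le> log \<eta> (L / (rr * Lk 0))"
    using eta rr_pos L0_pos Lk_le_L[of 0]
    by (subst le_log_iff) (auto simp: powr_realpow)
  then have "int ?b \<le> \<lfloor>log \<eta> (L / (rr * Lk 0))\<rfloor>"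
    by (simp add: le_floor_iff)
  then show ?thesis
    by linarith
qed

lemma drop_step_accepted:
  assumes "t \<in> Isteps - Gsteps"
  shows "f (xb t) < f (x t)" and "\<gamma> t = \<alpha> t (s t)"
proof -
  show full: "\<gamma> t = \<alpha> t (s t)"
    using assms step_size_le_max[of t] by (simp add: Gsteps_def gmax)
  show "f (xb t) < f (x t)"
  proof (rule ccontr)
    assume "\<not> f (xb t) < f (x t)"
    \<comment> \<open>a rejected step of positive length at least doubles the curvature estimate\<close>
    then have "2 * Lk t \<le> ell f g (x t) (x t - \<gamma> t *\<^sub>R d t)"
      using s_active[of t] Lk_pos[of t] full gam[of t]
      by (intro ell_ge_if_no_decrease) (auto simp: active_def xbar)
    then show False
      using assms mult_strict_right_mono[OF eta(2) Lk_pos[of t]] by (simp add: Isteps_def Lnext xbar)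
  qed
qed

lemma drop_step_cases:
  assumes "t \<in> Isteps - Gsteps"
  shows "card (active (Suc t)) < card (active t) \<or>
    card (active (Suc t)) = card (active t) \<and> \<alpha> (Suc t) = \<alpha> t \<circ> Transposition.transpose (s t) (v t)"
proof -
  note accepted = drop_step_accepted[OF assms]
  have weights: "\<alpha> (Suc t) = pfw_update (\<alpha> t) (s t) (v t) (\<alpha> t (s t))"
    using accepted by (simp add: anext)
  have "s t \<noteq> v t"
    using accepted(1) by (auto simp: xbar dt)
  have nonneg: "0 \<le> \<alpha> t (v t)"
    using convex_weights_iterate[of t] by (simp add: convex_weights_def)
  have fin: "finite (active t)"
    using finA by (simp add: active_def)
  have active_next: "active (Suc t) =
      (if \<alpha> t (v t) = 0 then insert (v t) (active t - {s t}) else active t - {s t})"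
    using support_pfw_update_full_step[where \<beta> = "\<alpha> t", OF \<open>s t \<noteq> v t\<close> vt(1)[of t] nonneg] s_active[of t]
    by (simp add: weights active_def)
  show ?thesis
  proof (cases "\<alpha> t (v t) = 0")
    case True
    then have "v t \<notin> active t"
      by (simp add: active_def)
    then have "card (active (Suc t)) = Suc (card (active t - {s t}))"
      using active_next True fin by simp
    also have "\<dots> = card (active t)"
      using card_Suc_Diff1[OF fin s_active] .
    finally have "card (active (Suc t)) = card (active t)" .
    then show ?thesis
      using pfw_update_full_step_eq_transpose[where \<beta> = "\<alpha> t", OF \<open>s t \<noteq> v t\<close> True] weights by simp
  next
    case False
    then show ?thesis
      using card_Diff1_less[OF fin s_active] active_next by simp
  qed
qed

lemma drop_run_card_active_antimono:
  assumes "{a..<b} \<subseteq> Isteps - Gsteps" "a \<le> i" "i \<le> j" "j \<le> b"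
  shows "card (active j) \<le> card (active i)"
  using assms(3,4)
proof (induction j rule: dec_induct)
  case (step k)
  then have "k \<in> {a..<b}"
    using assms(2) by simp
  then have "k \<in> Isteps - Gsteps"
    using assms(1) by blast
  then have "card (active (Suc k)) \<le> card (active k)"
    using drop_step_cases[of k] by linarith
  also have "\<dots> \<le> card (active i)"
    using step.IH[OF Suc_leD[OF step.prems]] .
  finally show ?case .
qed simp

lemma drop_run_relabelling:
  assumes "{a..<b} \<subseteq> Isteps - Gsteps" "a \<le> b"
    and "\<And>i. i \<in> {a..b} \<Longrightarrow> card (active i) = card (active a)"
  shows "\<exists>\<sigma>. \<sigma> permutes A \<and> \<alpha> b = \<alpha> a \<circ> \<sigma>"
  using assms(2,1,3)
proof (induction b rule: dec_induct)
  case base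
  show ?case
    by (intro exI[of _ id] conjI permutes_id) simp
next
  case (step k)
  have "{a..<k} \<subseteq> Isteps - Gsteps"
    using step.prems(1) by (rule subset_trans[rotated]) simp
  moreover have "card (active i) = card (active a)" if "i \<in> {a..k}" for i
    using step.prems(2)[of i] that by simp
  ultimately obtain \<sigma> where "\<sigma> permutes A" "\<alpha> k = \<alpha> a \<circ> \<sigma>"
    using step.IH by blast
  moreover have "k \<in> Isteps - Gsteps"
    using step.prems(1) step.hyps by fastforce
  moreover have "card (active (Suc k)) = card (active k)"
    using step.prems(2)[of k] step.prems(2)[of "Suc k"] step.hyps by simp
  ultimately have "\<alpha> (Suc k) = \<alpha> a \<circ> (\<sigma> \<circ> Transposition.transpose (s k) (v k))"
    using drop_step_cases[of k] by (simp add: comp_assoc)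
  moreover have "\<sigma> \<circ> Transposition.transpose (s k) (v k) permutes A"
    using permutes_compose[OF permutes_swap_id[OF s_in_A vt(1)] \<open>\<sigma> permutes A\<close>] .
  ultimately show ?case
    by blast
qed

lemma drop_run_objective_decreasing:
  assumes "{a..<b} \<subseteq> Isteps - Gsteps" "a \<le> i" "i < j" "j \<le> b"
  shows "f (x j) < f (x i)"
proof -
  have decrease: "f (x (Suc k)) < f (x k)" if "i \<le> k" "k < b" for k
    using drop_step_accepted(1)[OF subsetD[OF assms(1)]] assms(2) that by (simp add: xnext)
  have "Suc i \<le> j"
    using assms(3) by simp
  then show ?thesis
    using assms(4)
  proof (induction j rule: dec_induct)
    case (step k)
    then show ?case
      using decrease[of k] by simp
  qed (use decrease[of i] in simp)
qed

lemma inj_on_drop_run_weights: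
  assumes "{a..<b} \<subseteq> Isteps - Gsteps"
  shows "inj_on \<alpha> {a..b}"
proof (rule linorder_inj_onI)
  fix i j
  assume "i < j" "i \<in> {a..b}" "j \<in> {a..b}"
  then have "f (x j) < f (x i)"
    using drop_run_objective_decreasing[OF assms] by simp
  then show "\<alpha> i \<noteq> \<alpha> j"
    using convex_weights_iterate[of i] convex_weights_iterate[of j]
    by (auto simp: convex_weights_def)
qed auto

lemma card_drop_run_weights_le:
  assumes run: "{a..<b} \<subseteq> Isteps - Gsteps"
  shows "card (\<alpha> ` {a..b}) \<le> (\<Sum>k\<le>card A. \<Prod>i<k. card A - i)"
proof -
  let ?N = "\<lambda>i. card (active i)"
  let ?relabel = "\<lambda>i. {\<alpha> i \<circ> \<sigma> | \<sigma>. \<sigma> permutes A}"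
  define first where "first k = (LEAST i. i \<in> {a..b} \<and> ?N i = k)" for k
  have first: "first (?N j) \<in> {a..j}" "?N (first (?N j)) = ?N j" if "j \<in> {a..b}" for j
    using LeastI[of "\<lambda>i. i \<in> {a..b} \<and> ?N i = ?N j" j] Least_le[of "\<lambda>i. i \<in> {a..b} \<and> ?N i = ?N j" j]
      that by (auto simp: first_def)
  \<comment> \<open>the active set only shrinks along a run, and while its size stays put every step is a swap\<close>
  have "\<alpha> j \<in> ?relabel (first (?N j))" if j: "j \<in> {a..b}" for j
  proof -
    let ?i = "first (?N j)"
    have i: "a \<le> ?i" "?i \<le> j"
      using first(1)[OF j] by simp_all
    have sub: "{?i..<j} \<subseteq> Isteps - Gsteps"
      using i j by (intro subset_trans[OF _ run]) auto
    have const: "?N k = ?N ?i" if k: "k \<in> {?i..j}" for k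
    proof (rule antisym)
      show "?N k \<le> ?N ?i"
        using drop_run_card_active_antimono[OF run, of ?i k] i j k by simp
      show "?N ?i \<le> ?N k"
        using drop_run_card_active_antimono[OF run, of k j] first(2)[OF j] i j k by simp
    qed
    obtain \<sigma> where "\<sigma> permutes A" "\<alpha> j = \<alpha> ?i \<circ> \<sigma>"
      using drop_run_relabelling[OF sub i(2) const] by blast
    then show ?thesis
      by blast
  qed
  then have "\<alpha> ` {a..b} \<subseteq> (\<Union>k\<in>?N ` {a..b}. ?relabel (first k))"
    by blast
  moreover have "finite (?relabel i)" for i
    using finite_permutations[OF finA] by (simp add: setcompr_eq_image)
  ultimately have "card (\<alpha> ` {a..b}) \<le> card (\<Union>k\<in>?N ` {a..b}. ?relabel (first k))"
    by (intro card_mono) auto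
  also have "\<dots> \<le> (\<Sum>k\<in>?N ` {a..b}. card (?relabel (first k)))"
    by (rule card_UN_le) simp
  also have "\<dots> \<le> (\<Sum>k\<in>?N ` {a..b}. \<Prod>i<k. card A - i)"
  proof (rule sum_mono)
    fix k
    assume "k \<in> ?N ` {a..b}"
    then obtain j where "j \<in> {a..b}" "k = ?N j"
      by blast
    then show "card (?relabel (first k)) \<le> (\<Prod>i<k. card A - i)"
      using first card_relabellings_le[OF finA, of "active (first k)" "\<alpha> (first k)"]
        convex_weights_iterate[of "first k"]
      by (force simp: active_def convex_weights_def not_less order.antisym)
  qed
  also have "\<dots> \<le> (\<Sum>k\<le>card A. \<Prod>i<k. card A - i)"
    using finA by (intro sum_mono2) (auto simp: active_def intro: card_mono)
  finally show ?thesis .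
qed

lemma drop_run_length_le:
  assumes "{a..<a + c} \<subseteq> Isteps - Gsteps"
  shows "c \<le> 3 * fact (card A)"
proof -
  have "c + 1 = card (\<alpha> ` {a..a + c})"
    using card_image[OF inj_on_drop_run_weights[OF assms]] by simp
  also have "\<dots> \<le> 3 * fact (card A)"
    using card_drop_run_weights_le[OF assms] sum_falling_factorials_le by (rule order_trans)
  finally show ?thesis
    by simp
qed

lemma zero_in_Gsteps: "0 \<in> Gsteps"
proof -
  have "s 0 = x 0"
    using st(1)[of 0] by (auto simp: alpha0 split: if_splits)
  then show ?thesis
    by (simp add: Gsteps_def gmax alpha0)
qed

lemma card_Gsteps_Isteps_ge:
  "real (card (Gsteps \<inter> Isteps \<inter> {..t})) \<ge>
     real (t + 1) / (3 * fact (card A) + 1) - \<lfloor>log \<eta> (L / (rr * Lk 0))\<rfloor>"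
proof -
  define P where "P = Gsteps \<union> - Isteps"
  have "t + 1 \<le> (3 * fact (card A) + 1) * card ({..t} \<inter> P)"
  proof (rule card_atMost_inter_ge_if_gaps_bounded)
    show "0 \<in> P"
      using zero_in_Gsteps by (simp add: P_def)
    show "c \<le> 3 * fact (card A)" if "{a..<a + c} \<inter> P = {}" for a c
      using that by (intro drop_run_length_le[of a]) (auto simp: P_def)
  qed
  then have "real (t + 1) \<le> real (3 * fact (card A) + 1) * real (card ({..t} \<inter> P))"
    unfolding of_nat_mult[symmetric] of_nat_le_iff .
  then have "real (t + 1) \<le> (3 * fact (card A) + 1) * real (card ({..t} \<inter> P))"
    by (simp add: add.commute)
  then have "real (t + 1) / (3 * fact (card A) + 1) \<le> card ({..t} \<inter> P)"
    by (subst pos_divide_le_eq) (simp_all add: add_pos_nonneg mult.commute)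
  also have "card ({..t} \<inter> P) \<le> card (Gsteps \<inter> Isteps \<inter> {..t}) + card ({..<Suc t} - Isteps)"
    by (rule order_trans[OF card_mono card_Un_le]) (auto simp: P_def)
  finally show ?thesis
    using card_not_Isteps_le[of "Suc t"] by linarith
qed

lemma infinite_Gsteps: "infinite Gsteps"
proof
  assume "finite Gsteps"
  define M :: real where "M = 3 * fact (card A) + 1"
  define K where "K = \<lfloor>log \<eta> (L / (rr * Lk 0))\<rfloor>"
  obtain t :: nat where "(card Gsteps + K + 1) * M \<le> t"
    using real_arch_simple by blast
  then have "card Gsteps + 1 \<le> real (t + 1) / M - K"
    by (simp add: M_def field_simps add_pos_nonneg)
  also have "\<dots> \<le> card (Gsteps \<inter> Isteps \<inter> {..t})"
    using card_Gsteps_Isteps_ge[of t] by (simp add: M_def K_def)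
  also have "\<dots> \<le> card Gsteps"
    using \<open>finite Gsteps\<close> by (intro of_nat_mono card_mono) auto
  finally show False
    by simp
qed

end

theorem lemma7:
  fixes A :: "'a::euclidean_space set"
    and f :: "'a \<Rightarrow> real" and g :: "'a \<Rightarrow> 'a" and L :: real
    and \<eta> :: real and r :: "nat \<Rightarrow> real" and rr :: real
    and xm1 :: 'a and x v s d xb :: "nat \<Rightarrow> 'a"
    and \<gamma> \<gamma>max Lk :: "nat \<Rightarrow> real" and \<alpha> :: "nat \<Rightarrow> 'a \<Rightarrow> real"
    and xstar :: 'a
  assumes finA: "finite A" and neA: "A \<noteq> {}"
    and grad: "\<And>y. (f has_derivative (\<lambda>h. g y \<bullet> h)) (at y)"
    and lip: "\<And>y z. norm (g y - g z) \<le> L * norm (y - z)"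
    and xstar: "xstar \<in> convex hull A" "\<And>y. y \<in> convex hull A \<Longrightarrow> f xstar \<le> f y"
    and eta: "1 < \<eta>" "\<eta> < 2"
    and r_pos: "\<And>t. 0 < r t" and r_le1: "\<And>t. r t \<le> 1"
    and r_prod: "(\<lambda>T. \<Prod>t<T. r t) \<longlonglongrightarrow> rr" and rr_pos: "0 < rr"
    and xm1: "xm1 \<in> A"
    and x0: "x 0 \<in> A" "\<And>u. u \<in> A \<Longrightarrow> g xm1 \<bullet> x 0 \<le> g xm1 \<bullet> u"
    and L0: "Lk 0 = ell f g xm1 (x 0)" and L0_pos: "0 < Lk 0"
    and vt: "\<And>t. v t \<in> A" "\<And>t u. u \<in> A \<Longrightarrow> g (x t) \<bullet> v t \<le> g (x t) \<bullet> u"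
    and alpha0: "\<alpha> 0 = (\<lambda>u. if u = x 0 then 1 else 0)"
    and st: "\<And>t. s t \<in> {u \<in> A. \<alpha> t u > 0}"
      "\<And>t u. u \<in> {u \<in> A. \<alpha> t u > 0} \<Longrightarrow> g (x t) \<bullet> u \<le> g (x t) \<bullet> s t"
    and dt: "\<And>t. d t = s t - v t"
    and gmax: "\<And>t. \<gamma>max t = \<alpha> t (s t)"
    and gam: "\<And>t. \<gamma> t = min (g (x t) \<bullet> d t / (Lk t * (norm (d t))\<^sup>2)) (\<gamma>max t)"
    and xbar: "\<And>t. xb t = x t - \<gamma> t *\<^sub>R d t"
    and Lnext: "\<And>t. Lk (Suc t) = max (ell f g (x t) (xb t)) (r t * Lk t)"
    and xnext: "\<And>t. x (Suc t) = (if f (xb t) < f (x t) then xb t else x t)"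
    and anext: "\<And>t. \<alpha> (Suc t) =
        (if f (xb t) < f (x t) then pfw_update (\<alpha> t) (s t) (v t) (\<gamma> t) else \<alpha> t)"
  defines "G \<equiv> {t. \<gamma>max t \<ge> 1 \<or> \<gamma> t < \<gamma>max t}"
    and "I \<equiv> {t. Lk (Suc t) \<le> \<eta> * Lk t}"
  shows "(\<forall>t. norm (d t) \<le> diameter A \<and>
            (\<forall>c\<in>{0..\<gamma>max t}. x t - c *\<^sub>R d t \<in> convex hull A))
       \<and> infinite G
       \<and> (\<forall>t. real (card (G \<inter> I \<inter> {..t})) \<ge>
              real (t + 1) / (3 * fact (card A) + 1)
              - real_of_int \<lfloor>log \<eta> (L / (rr * Lk 0))\<rfloor>)
       \<and> (convex_on UNIV f \<longrightarrow> (\<forall>t. g (x t) \<bullet> d t \<ge> (f (x t) - f xstar) / 1))"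
proof -
  interpret pairwise_acfw A f g L \<eta> r rr xm1 x v s d xb \<gamma> \<gamma>max Lk \<alpha>
    by unfold_locales (fact assms)+
  have "G = Gsteps" "I = Isteps"
    by (simp_all add: G_def I_def Gsteps_def Isteps_def)
  then show ?thesis
    using norm_direction_le_diameter step_in_convex_hull infinite_Gsteps card_Gsteps_Isteps_ge
      suboptimality_le_inner_direction[OF _ xstar(1)]
    by auto
qed

end
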